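(* (1) $\mathsf{WFT}_{\mathbb S}\le_W\mathsf T\mathsf C_{\mathbb N^\mathbb N}$ and $\mathsf{WFT}_{\mathbb S}\not\le_W\overline{\mathsf C_{\mathbb N^\mathbb N}}$. (2) $\mathsf{WFT}\le_W\mathsf C_{\mathbb N^\mathbb N}*\mathsf T\mathsf C_{\mathbb N^\mathbb N}$ and $\mathsf{WFT}\not\le_W\mathsf T\mathsf C_{\mathbb N^\mathbb N}$.
   Context: A problem $f:\subseteq X\rightrightarrows Y$ between represented spaces is a partial multi-valued map; $F\vdash f$ means $\delta_YF(p)\in f(\delta_X(p))$ whenever $\delta_X(p)\in\mathrm{dom}(f)$; $f\le_W g$ iff there are computable partial $H,K$ with $H\langle\mathrm{id},GK\rangle\vdash f$ for all $G\vdash g$. The compositional product $f*g$ is a problem representing the $\le_W$-maximum of $\{f_0\circ g_0:f_0\le_Wf,\ g_0\le_Wg\}$ (which exists). $\mathcal A_-(\mathbb N^\mathbb N)$ is the space of closed subsets of Baire space represented by $p\mapsto\mathbb N^\mathbb N\setminus\bigcup_nB_{p(n)}$ for a standard enumeration $(B_n)$ of basic open sets (including empty ones). $\mathsf C_{\mathbb N^\mathbb N}:\subseteq\mathcal A_-(\mathbb N^\mathbb N)\rightrightarrows\mathbb N^\mathbb N$, $A\mapsto A$, on nonempty $A$. $\mathsf{WFT}:\mathcal A_-(\mathbb N^\mathbb N)\to\{0,1\}$ gives $1$ iff $A=\emptyset$ ($\{0,1\}$ represented by $p\mapsto p(0)$), and $\mathsf{WFT}_{\mathbb S}$ is the same map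 with target Sierpiński space $\mathbb S=\{0,1\}$ represented by $\delta_{\mathbb S}(p)=0\iff p=000\dots$. For $p\in\mathbb{N}^\mathbb{N}$, $p-1$ is the concatenation of $p(0)-1,p(1)-1,\dots$ with $0-1$ the empty word; the completion of $(X,\delta_X)$ is $\overline X=X\cup\{\bot\}$ with $\delta_{\overline X}(p)=\delta_X(p-1)$ if $p-1$ is an infinite sequence in $\mathrm{dom}(\delta_X)$, $\bot$ otherwise. For $f:\subseteq X\rightrightarrows Y$: $\overline f:\overline X\rightrightarrows\overline Y$ equals $f$ on $\mathrm{dom}(f)$ and $\overline Y$ elsewhere; $\mathsf Tf:X\rightrightarrows Y$ equals $f$ on $\mathrm{dom}(f)$ and $Y$ elsewhere. *)

theory Defs
  imports Main "HOL-Library.Nat_Bijection" "HOL-Library.Infinite_Set"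
begin

type_synonym baire = "nat \<Rightarrow> nat"

datatype recf = Zr | Sc | Proj nat | Comp recf "recf list" | Prim recf recf | Mn recf | Orc

inductive ev :: "baire \<Rightarrow> recf \<Rightarrow> nat list \<Rightarrow> nat \<Rightarrow> bool" for p :: baire where
  ev_Zr: "ev p Zr xs 0"
| ev_Sc: "ev p Sc (x # xs) (Suc x)"
| ev_Proj: "i < length xs \<Longrightarrow> ev p (Proj i) xs (xs ! i)"
| ev_Comp: "list_all2 (\<lambda>g y. ev p g xs y) gs ys \<Longrightarrow> ev p f ys z \<Longrightarrow> ev p (Comp f gs) xs z"
| ev_Prim0: "ev p f xs z \<Longrightarrow> ev p (Prim f g) (0 # xs) z"
| ev_PrimS: "ev p (Prim f g) (n # xs) r \<Longrightarrow> ev p g (r # n # xs) z \<Longrightarrow> ev p (Prim f g) (Suc n # xs) z"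
| ev_Mn: "ev p f (n # xs) 0 \<Longrightarrow> (\<forall>m<n. \<exists>y. 0 < y \<and> ev p f (m # xs) y) \<Longrightarrow> ev p (Mn f) xs n"
| ev_Orc: "ev p Orc (x # xs) (p x)"

definition computable :: "(baire \<Rightarrow> baire option) \<Rightarrow> bool" where
  "computable F \<longleftrightarrow> (\<exists>e. \<forall>p q. F p = Some q \<longrightarrow> (\<forall>n. ev p e [n] (q n)))"

definition pair :: "baire \<Rightarrow> baire \<Rightarrow> baire" where
  "pair p q = (\<lambda>n. if even n then p (n div 2) else q (n div 2))"

text \<open>A represented space is a type together with a partial map delta from Baire space
  (None = p not a name).  A problem f is a set-valued map; its domain is {x. f x \<noteq> {}}.\<close>

definition realizes :: "(baire \<Rightarrow> 'a option) \<Rightarrow> (baire \<Rightarrow> 'b option) \<Rightarrow> ('a \<Rightarrow> 'b set)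
    \<Rightarrow> (baire \<Rightarrow> baire option) \<Rightarrow> bool" where
  "realizes dX dY f F \<longleftrightarrow>
     (\<forall>p x. dX p = Some x \<and> f x \<noteq> {} \<longrightarrow>
        (\<exists>q y. F p = Some q \<and> dY q = Some y \<and> y \<in> f x))"

definition weihrauch_le ::
  "(baire \<Rightarrow> 'a option) \<Rightarrow> (baire \<Rightarrow> 'b option) \<Rightarrow> ('a \<Rightarrow> 'b set) \<Rightarrow>
   (baire \<Rightarrow> 'c option) \<Rightarrow> (baire \<Rightarrow> 'd option) \<Rightarrow> ('c \<Rightarrow> 'd set) \<Rightarrow> bool" where
  "weihrauch_le dX dY f dU dV g \<longleftrightarrow>
     (\<exists>H K. computable H \<and> computable K \<and>
        (\<forall>G. realizes dU dV g G \<longrightarrow>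
           realizes dX dY f (\<lambda>p. case K p of None \<Rightarrow> None
                                 | Some k \<Rightarrow> (case G k of None \<Rightarrow> None
                                               | Some r \<Rightarrow> H (pair p r)))))"

definition pcomp :: "('b \<Rightarrow> 'c set) \<Rightarrow> ('a \<Rightarrow> 'b set) \<Rightarrow> 'a \<Rightarrow> 'c set" where
  "pcomp f g x = (if g x \<noteq> {} \<and> (\<forall>y\<in>g x. f y \<noteq> {}) then (\<Union>y\<in>g x. f y) else {})"

definition delta_baire :: "baire \<Rightarrow> baire option" where
  "delta_baire p = Some p"

text \<open>f \<le>_W h * g, where h * g is the compositional product, i.e. (a problem representing)
  the maximum of {h0 \<circ> g0 : h0 \<le>_W h, g0 \<le>_W g}.  Every problem is Weihrauch equivalent to a
  problem on Baire space with identity representation (its realizer version), and the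
  composition can be transported accordingly, so the maximum is attained by compositions of
  problems on Baire space.\<close>

definition weihrauch_le_cprod ::
  "(baire \<Rightarrow> 'a option) \<Rightarrow> (baire \<Rightarrow> 'b option) \<Rightarrow> ('a \<Rightarrow> 'b set) \<Rightarrow>
   (baire \<Rightarrow> 'c option) \<Rightarrow> (baire \<Rightarrow> 'd option) \<Rightarrow> ('c \<Rightarrow> 'd set) \<Rightarrow>
   (baire \<Rightarrow> 'e option) \<Rightarrow> (baire \<Rightarrow> 'g option) \<Rightarrow> ('e \<Rightarrow> 'g set) \<Rightarrow> bool" where
  "weihrauch_le_cprod dX dY f dU dV h dR dS g \<longleftrightarrow>
     (\<exists>(h0 :: baire \<Rightarrow> baire set) (g0 :: baire \<Rightarrow> baire set).
        weihrauch_le delta_baire delta_baire h0 dU dV h \<and>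
        weihrauch_le delta_baire delta_baire g0 dR dS g \<and>
        weihrauch_le dX dY f delta_baire delta_baire (pcomp h0 g0))"

definition basic_open :: "nat \<Rightarrow> baire set" where
  "basic_open n = (case n of 0 \<Rightarrow> {}
     | Suc m \<Rightarrow> {q. \<forall>i < length (list_decode m). q i = list_decode m ! i})"

definition delta_closed :: "baire \<Rightarrow> baire set option" where
  "delta_closed p = Some (UNIV - (\<Union>n. basic_open (p n)))"

definition delta_two :: "baire \<Rightarrow> nat option" where
  "delta_two p = (if p 0 \<le> 1 then Some (p 0) else None)"

definition delta_sierp :: "baire \<Rightarrow> nat option" where
  "delta_sierp p = Some (if p = (\<lambda>_. 0) then 0 else 1)"

text \<open>Completion: None plays the role of bottom.  p - 1 is infinite iff p has infinitely many
  nonzero entries; then (p - 1)(k) = p(n_k) - 1 with n_k the k-th index where p is nonzero.\<close>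

definition minus_one :: "baire \<Rightarrow> baire" where
  "minus_one p = (\<lambda>k. p (enumerate {n. 0 < p n} k) - 1)"

definition completion :: "(baire \<Rightarrow> 'a option) \<Rightarrow> baire \<Rightarrow> 'a option option" where
  "completion d p = (if infinite {n. 0 < p n}
      then (case d (minus_one p) of None \<Rightarrow> Some None | Some x \<Rightarrow> Some (Some x))
      else Some None)"

definition pcompletion :: "('a \<Rightarrow> 'b set) \<Rightarrow> 'a option \<Rightarrow> 'b option set" where
  "pcompletion f x = (case x of Some a \<Rightarrow> (if f a \<noteq> {} then Some ` f a else UNIV) | None \<Rightarrow> UNIV)"

definition totalization :: "('a \<Rightarrow> 'b set) \<Rightarrow> 'a \<Rightarrow> 'b set" where
  "totalization f x = (if f x \<noteq> {} then f x else UNIV)"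

definition C_baire :: "baire set \<Rightarrow> baire set" where
  "C_baire A = (if A \<noteq> {} then A else {})"

definition WFT :: "baire set \<Rightarrow> nat set" where
  "WFT A = {if A = {} then 1 else 0}"

text \<open>WFT_S is the same map, but with target Sierpinski space (delta_sierp).\<close>

end

theory Submission
  imports Defs
begin

text \<open>
  A point r returned by the totalization of C on a name p of a closed set A lies in A iff A is
  nonempty, and r \<notin> A is semi-decidable from p and r: wait until r falls into one of the basic
  open sets enumerated by p.  This Sierpinski answer gives the reduction of WFT_S.  To decide
  emptiness, C is then asked for a point of a closed set whose points reveal in their first entry
  whether that Sierpinski answer is 0^\<omega>.

  The non-reductions are diagonal arguments.  By the recursion theorem for names of closed sets,
  a name p may describe a set that depends on what the putative reduction does on p itself, and
  p is chosen so that its set is nonempty exactly when the reduction's verdict on p is wrong.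
  This is possible because the right-hand problems accept many answers (every sequence when K
  names the empty set; for the completion also names that look like \<bottom> for arbitrarily long), and
  by the use principle the verdict on each of them is already fixed by finite prefixes.
\<close>

section \<open>Oracle machines are deterministic and continuous\<close>

definition agree :: "nat \<Rightarrow> baire \<Rightarrow> baire \<Rightarrow> bool" where
  "agree N p p' \<longleftrightarrow> (\<forall>i<N. p' i = p i)"

definition near :: "baire \<Rightarrow> (baire \<Rightarrow> bool) \<Rightarrow> bool" where
  "near p P \<longleftrightarrow> (\<exists>N. \<forall>p'. agree N p p' \<longrightarrow> P p')"

lemma agree_refl [simp]: "agree N p p"
  unfolding agree_def by simp

lemma agree_mono: "agree N' p p' \<Longrightarrow> N \<le> N' \<Longrightarrow> agree N p p'"
  unfolding agree_def by auto

lemma agree_sym: "agree N p p' \<Longrightarrow> agree N p' p"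
  unfolding agree_def by simp

lemma agree_trans: "agree N p p' \<Longrightarrow> agree N p' p'' \<Longrightarrow> agree N p p''"
  unfolding agree_def by simp

lemma agree_pair: "agree N p p' \<Longrightarrow> agree N r r' \<Longrightarrow> agree N (pair p r) (pair p' r')"
  unfolding agree_def pair_def by auto

lemma near_mono: "near p P \<Longrightarrow> (\<And>p'. P p' \<Longrightarrow> Q p') \<Longrightarrow> near p Q"
  unfolding near_def by blast

lemma near_always: "(\<And>p'. P p') \<Longrightarrow> near p P"
  unfolding near_def by blast

lemma near_conj: "near p P \<Longrightarrow> near p Q \<Longrightarrow> near p (\<lambda>p'. P p' \<and> Q p')"
  unfolding near_def by (meson agree_mono max.cobounded1 max.cobounded2)

lemma near_all_less:
  "(\<And>m. m < n \<Longrightarrow> near p (P m)) \<Longrightarrow> near p (\<lambda>p'. \<forall>m<(n::nat). P m p')"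
proof (induction n)
  case 0
  show ?case by (simp add: near_always)
next
  case (Suc n)
  then have "near p (\<lambda>p'. (\<forall>m<n. P m p') \<and> P n p')" by (simp add: near_conj)
  then show ?case by (rule near_mono) (auto simp: less_Suc_eq)
qed

lemma near_list_all2:
  "list_all2 (\<lambda>g y. near p (\<lambda>p'. P p' g y)) gs ys \<Longrightarrow> near p (\<lambda>p'. list_all2 (P p') gs ys)"
proof (induction rule: list_all2_induct)
  case Nil
  show ?case by (simp add: near_always)
next
  case (Cons g gs y ys)
  then show ?case by (simp add: near_conj)
qed

lemma list_all2_unique:
  "list_all2 (\<lambda>g y. \<forall>y'. P g y' \<longrightarrow> y = y') gs ys \<Longrightarrow> list_all2 P gs ys' \<Longrightarrow> ys = ys'"
proof (induction arbitrary: ys' rule: list_all2_induct)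
  case Nil
  then show ?case by simp
next
  case (Cons g gs y ys)
  then show ?case by (cases ys') auto
qed

lemma ev_deterministic: "ev p e xs y \<Longrightarrow> ev p e xs y' \<Longrightarrow> y = y'"
proof (induction arbitrary: y' rule: ev.induct)
  case (ev_Comp xs gs ys f z)
  from ev_Comp.prems obtain ys' where args: "list_all2 (\<lambda>g. ev p g xs) gs ys'" and f: "ev p f ys' y'"
    by (cases rule: ev.cases) auto
  have "list_all2 (\<lambda>g y. \<forall>y'. ev p g xs y' \<longrightarrow> y = y') gs ys"
    using ev_Comp.IH(1) by (rule list_all2_mono) auto
  then have "ys = ys'" using args by (rule list_all2_unique)
  then show ?case using ev_Comp.IH(2) f by simp
next
  case (ev_Prim0 f xs z g)
  from ev_Prim0.prems have "ev p f xs y'" by (cases rule: ev.cases) auto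
  then show ?case using ev_Prim0.IH by simp
next
  case (ev_PrimS f g n xs r z)
  from ev_PrimS.prems obtain r' where rec: "ev p (Prim f g) (n # xs) r'" and step: "ev p g (r' # n # xs) y'"
    by (cases rule: ev.cases) auto
  have "r = r'" using ev_PrimS.IH(1) rec by simp
  then show ?case using ev_PrimS.IH(2) step by simp
next
  case (ev_Mn f n xs)
  from ev_Mn.prems have zero: "ev p f (y' # xs) 0" and pos: "\<forall>m<y'. \<exists>y>0. ev p f (m # xs) y"
    by (cases rule: ev.cases, auto)+
  show ?case
  proof (rule linorder_cases)
    assume "n < y'"
    with pos obtain y where "y > 0" "ev p f (n # xs) y" by blast
    with ev_Mn.IH(1) show ?thesis by fastforce
  next
    assume "y' < n"
    with ev_Mn.IH(2) obtain y where "y > 0" "\<forall>y''. ev p f (y' # xs) y'' \<longrightarrow> y = y''" by blast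
    with zero show ?thesis by fastforce
  qed
qed (erule ev.cases; simp; fail)+

lemma ev_continuous: "ev p e xs y \<Longrightarrow> near p (\<lambda>p'. ev p' e xs y)"
proof (induction rule: ev.induct)
  case (ev_Comp xs gs ys f z)
  have "list_all2 (\<lambda>g y. near p (\<lambda>p'. ev p' g xs y)) gs ys"
    using ev_Comp.IH(1) by (rule list_all2_mono) auto
  then have "near p (\<lambda>p'. list_all2 (\<lambda>g. ev p' g xs) gs ys \<and> ev p' f ys z)"
    using ev_Comp.IH(2) by (intro near_conj near_list_all2)
  then show ?case by (rule near_mono) (auto intro: ev.ev_Comp)
next
  case (ev_PrimS f g n xs r z)
  from near_conj[OF ev_PrimS.IH] show ?case by (rule near_mono) (auto intro: ev.ev_PrimS)
next
  case (ev_Mn f n xs)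
  have "near p (\<lambda>p'. \<forall>m<n. \<exists>y>0. ev p' f (m # xs) y)"
    using ev_Mn.IH(2) by (intro near_all_less) (blast intro: near_mono)
  from near_conj[OF ev_Mn.IH(1) this] show ?case by (rule near_mono) (auto intro: ev.ev_Mn)
next
  case (ev_Orc x xs)
  have "agree (Suc x) p p' \<Longrightarrow> ev p' Orc (x # xs) (p x)" for p'
    using ev.ev_Orc[of p' x xs] by (simp add: agree_def)
  then show ?case unfolding near_def by blast
next
  case (ev_Prim0 f xs z g)
  then show ?case by (auto elim: near_mono intro: ev.ev_Prim0)
qed (auto intro!: near_always ev.intros)

definition certified_output :: "recf \<Rightarrow> baire \<Rightarrow> baire \<Rightarrow> nat \<Rightarrow> nat \<Rightarrow> nat \<Rightarrow> bool" where
  "certified_output e p r j v N \<longleftrightarrow> (\<forall>p' r'. agree N p p' \<and> agree N r r' \<longrightarrow> ev (pair p' r') e [j] v)"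

lemma certified_output_causal:
  "agree N p p' \<Longrightarrow> certified_output e p r j v N = certified_output e p' r j v N"
  and certified_output_cong:
  "agree N r r' \<Longrightarrow> certified_output e p r j v N = certified_output e p r' j v N"
  unfolding certified_output_def using agree_sym agree_trans by blast+

lemma certified_output_mono:
  "certified_output e p r j v N \<Longrightarrow> N \<le> N' \<Longrightarrow> certified_output e p r j v N'"
  unfolding certified_output_def using agree_mono by blast

lemma ex_certified_output_iff: "(\<exists>N. certified_output e p r j v N) \<longleftrightarrow> ev (pair p r) e [j] v"
proof
  assume "\<exists>N. certified_output e p r j v N"
  then show "ev (pair p r) e [j] v" unfolding certified_output_def using agree_refl by blast
next
  assume "ev (pair p r) e [j] v"
  then obtain N where "\<forall>u. agree N (pair p r) u \<longrightarrow> ev u e [j] v"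
    using ev_continuous unfolding near_def by blast
  then have "certified_output e p r j v N"
    unfolding certified_output_def using agree_pair by blast
  then show "\<exists>N. certified_output e p r j v N" ..
qed

definition computes :: "baire \<Rightarrow> nat \<Rightarrow> recf \<Rightarrow> (nat list \<Rightarrow> nat) \<Rightarrow> bool" where
  "computes q k e F \<longleftrightarrow> (\<forall>xs. length xs = k \<longrightarrow> ev q e xs (F xs))"

fun prec :: "(nat list \<Rightarrow> nat) \<Rightarrow> (nat list \<Rightarrow> nat) \<Rightarrow> nat \<Rightarrow> nat list \<Rightarrow> nat" where
  "prec F G 0 ys = F ys"
| "prec F G (Suc n) ys = G (prec F G n ys # n # ys)"

named_theorems computes_intros

lemma computes_cong:
  "computes q k e F \<Longrightarrow> (\<And>xs. length xs = k \<Longrightarrow> F xs = F' xs) \<Longrightarrow> computes q k e F'"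
  unfolding computes_def by auto

lemma computes_Zr [computes_intros]: "computes q k Zr (\<lambda>_. 0)"
  unfolding computes_def by (auto intro: ev.intros)

lemma computes_Sc [computes_intros]: "0 < k \<Longrightarrow> computes q k Sc (\<lambda>xs. Suc (hd xs))"
  unfolding computes_def by (auto simp: neq_Nil_conv intro!: ev.ev_Sc)

lemma computes_Orc [computes_intros]: "0 < k \<Longrightarrow> computes q k Orc (\<lambda>xs. q (hd xs))"
  unfolding computes_def by (auto simp: neq_Nil_conv intro!: ev.ev_Orc)

lemma computes_Proj [computes_intros]: "i < k \<Longrightarrow> computes q k (Proj i) (\<lambda>xs. xs ! i)"
  unfolding computes_def by (auto intro: ev.intros)

lemma computes_Comp1 [computes_intros]:
  "computes q 1 f F \<Longrightarrow> computes q k g G \<Longrightarrow> computes q k (Comp f [g]) (\<lambda>xs. F [G xs])"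
  unfolding computes_def by (auto intro!: ev.ev_Comp[where ys="[_]"])

lemma computes_Comp2 [computes_intros]:
  "computes q 2 f F \<Longrightarrow> computes q k g1 G1 \<Longrightarrow> computes q k g2 G2 \<Longrightarrow>
   computes q k (Comp f [g1, g2]) (\<lambda>xs. F [G1 xs, G2 xs])"
  unfolding computes_def by (auto intro!: ev.ev_Comp[where ys="[_, _]"])

lemma computes_Comp3 [computes_intros]:
  "computes q 3 f F \<Longrightarrow> computes q k g1 G1 \<Longrightarrow> computes q k g2 G2 \<Longrightarrow> computes q k g3 G3 \<Longrightarrow>
   computes q k (Comp f [g1, g2, g3]) (\<lambda>xs. F [G1 xs, G2 xs, G3 xs])"
  unfolding computes_def by (auto intro!: ev.ev_Comp[where ys="[_, _, _]"])

lemma computes_Prim: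
  "computes q k f F \<Longrightarrow> computes q (Suc (Suc k)) g G \<Longrightarrow>
   computes q (Suc k) (Prim f g) (\<lambda>xs. prec F G (hd xs) (tl xs))"
  unfolding computes_def
proof (intro allI impI)
  fix xs :: "nat list"
  assume f: "\<forall>xs. length xs = k \<longrightarrow> ev q f xs (F xs)"
    and g: "\<forall>xs. length xs = Suc (Suc k) \<longrightarrow> ev q g xs (G xs)" and "length xs = Suc k"
  then obtain a ys where xs: "xs = a # ys" and "length ys = k" by (cases xs) auto
  then have "ev q (Prim f g) (n # ys) (prec F G n ys)" for n
    using f g by (induction n) (auto intro: ev.intros)
  then show "ev q (Prim f g) xs (prec F G (hd xs) (tl xs))" using xs by simp
qed

lemma computes_Prim_numerals [computes_intros]:
  "computes q 0 f F \<Longrightarrow> computes q 2 g G \<Longrightarrow> computes q 1 (Prim f g) (\<lambda>xs. prec F G (hd xs) (tl xs))"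
  "computes q 1 f F \<Longrightarrow> computes q 3 g G \<Longrightarrow> computes q 2 (Prim f g) (\<lambda>xs. prec F G (hd xs) (tl xs))"
  "computes q 2 f F \<Longrightarrow> computes q 4 g G \<Longrightarrow> computes q 3 (Prim f g) (\<lambda>xs. prec F G (hd xs) (tl xs))"
  using computes_Prim[of q 0 f F g G] computes_Prim[of q 1 f F g G] computes_Prim[of q 2 f F g G]
  by (simp_all add: numeral_eq_Suc)

lemma computes_cong_numerals:
  "computes q 1 e F \<Longrightarrow> (\<And>a. F [a] = F' [a]) \<Longrightarrow> computes q 1 e F'"
  "computes q 2 e F \<Longrightarrow> (\<And>a b. F [a, b] = F' [a, b]) \<Longrightarrow> computes q 2 e F'"
  "computes q 3 e F \<Longrightarrow> (\<And>a b c. F [a, b, c] = F' [a, b, c]) \<Longrightarrow> computes q 3 e F'"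
  by (erule computes_cong, force simp: numeral_eq_Suc length_Suc_conv)+

definition "add_prog = Prim (Proj 0) (Comp Sc [Proj 0])"

lemma computes_add [computes_intros]: "computes q 2 add_prog (\<lambda>xs. xs!0 + xs!1)"
  unfolding add_prog_def
  apply (rule computes_cong_numerals, ((rule computes_intros)+ | simp)+)
  subgoal for a by (induction a) simp_all
  done

definition "pred_prog = Prim Zr (Proj 1)"

lemma computes_pred [computes_intros]: "computes q 1 pred_prog (\<lambda>xs. xs!0 - 1)"
  unfolding pred_prog_def
  apply (rule computes_cong_numerals, ((rule computes_intros)+ | simp)+)
  subgoal for a by (cases a) simp_all
  done

definition "sub_prog = Prim (Proj 0) (Comp pred_prog [Proj 0])"

lemma computes_sub [computes_intros]: "computes q 2 sub_prog (\<lambda>xs. xs!1 - xs!0)"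
  unfolding sub_prog_def
  apply (rule computes_cong_numerals, ((rule computes_intros)+ | simp)+)
  subgoal for a by (induction a) simp_all
  done

definition "cond_prog = Prim (Proj 0) (Proj 3)"

lemma computes_cond [computes_intros]:
  "computes q 3 cond_prog (\<lambda>xs. if xs!0 = 0 then xs!1 else xs!2)"
  unfolding cond_prog_def
  apply (rule computes_cong_numerals, ((rule computes_intros)+ | simp)+)
  subgoal for a by (cases a) simp_all
  done

definition "sgn_prog = Prim Zr (Comp Sc [Zr])"

lemma computes_sgn [computes_intros]: "computes q 1 sgn_prog (\<lambda>xs. if xs!0 = 0 then 0 else 1)"
  unfolding sgn_prog_def
  apply (rule computes_cong_numerals, ((rule computes_intros)+ | simp)+)
  subgoal for a by (cases a) simp_all
  done

definition "neq_prog = Comp sgn_prog [Comp add_prog [Comp sub_prog [Proj 1, Proj 0], Comp sub_prog [Proj 0, Proj 1]]]"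

lemma computes_neq [computes_intros]: "computes q 2 neq_prog (\<lambda>xs. if xs!0 = xs!1 then 0 else 1)"
  unfolding neq_prog_def
  by (rule computes_cong_numerals, ((rule computes_intros)+ | simp)+)

definition "triangle_prog = Prim Zr (Comp Sc [Comp add_prog [Proj 0, Proj 1]])"

lemma computes_triangle [computes_intros]: "computes q 1 triangle_prog (\<lambda>xs. triangle (xs!0))"
  unfolding triangle_prog_def
  apply (rule computes_cong_numerals, ((rule computes_intros)+ | simp)+)
  subgoal for a by (induction a) simp_all
  done

definition "prod_encode_prog = Comp add_prog [Comp triangle_prog [add_prog], Proj 0]"

lemma computes_prod_encode [computes_intros]:
  "computes q 2 prod_encode_prog (\<lambda>xs. prod_encode (xs!0, xs!1))"
  unfolding prod_encode_prog_def
  by (rule computes_cong_numerals, ((rule computes_intros)+ | simp)+) (simp add: prod_encode_def)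

definition "double_prog = Comp add_prog [Proj 0, Proj 0]"

lemma computes_double [computes_intros]: "computes q 1 double_prog (\<lambda>xs. xs!0 + xs!0)"
  unfolding double_prog_def
  by (rule computes_cong_numerals, ((rule computes_intros)+ | simp)+)

definition "odd_entry_prog = Comp Orc [Comp Sc [double_prog]]"

lemma computes_odd_entry [computes_intros]:
  "computes q 1 odd_entry_prog (\<lambda>xs. q (Suc (xs!0 + xs!0)))"
  unfolding odd_entry_prog_def
  by (rule computes_cong_numerals, ((rule computes_intros)+ | simp)+)

definition "even_entry_prog = Comp Orc [double_prog]"

lemma computes_even_entry [computes_intros]: "computes q 1 even_entry_prog (\<lambda>xs. q (xs!0 + xs!0))"
  unfolding even_entry_prog_def
  by (rule computes_cong_numerals, ((rule computes_intros)+ | simp)+)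

lemma computable_total:
  assumes "\<And>q. computes q 1 e (\<lambda>xs. f q (xs!0))"
  shows "computable (\<lambda>q. Some (f q))"
proof -
  have "ev p e [n] (f p n)" for p n
    using assms[of p] unfolding computes_def by (auto dest: spec[of _ "[n]"])
  then show ?thesis unfolding computable_def by auto
qed

lemma computable_id: "computable (\<lambda>q. Some q)"
proof -
  have "computes q 1 Orc (\<lambda>xs. q (xs!0))" for q
    by (rule computes_cong_numerals(1)[OF computes_Orc]) simp_all
  then show ?thesis using computable_total[of Orc "\<lambda>q n. q n"] by simp
qed

section \<open>Names of closed sets and the escape detector\<close>

definition closed_set :: "baire \<Rightarrow> baire set" where
  "closed_set p = UNIV - (\<Union>n. basic_open (p n))"

definition prefix :: "baire \<Rightarrow> nat \<Rightarrow> nat list" where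
  "prefix x n = map x [0..<n]"

definition odd_part :: "baire \<Rightarrow> baire" where
  "odd_part q = (\<lambda>i. q (Suc (i + i)))"

lemma delta_closed_eq: "delta_closed p = Some (closed_set p)"
  unfolding delta_closed_def closed_set_def by simp

lemma length_prefix [simp]: "length (prefix x n) = n"
  unfolding prefix_def by simp

lemma nth_prefix [simp]: "i < n \<Longrightarrow> prefix x n ! i = x i"
  unfolding prefix_def by simp

lemma prefix_Suc_Suc: "prefix x (Suc (Suc m)) = x 0 # x 1 # prefix (\<lambda>i. x (Suc (Suc i))) m"
  unfolding prefix_def by (simp add: map_upt_Suc del: upt_Suc)

lemma all_prefixes:
  "(\<forall>n. P (prefix x n)) \<longleftrightarrow> P [] \<and> P [x 0] \<and> (\<forall>m. P (x 0 # x 1 # prefix (\<lambda>i. x (Suc (Suc i))) m))"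
proof -
  have "(\<forall>n. P (prefix x n)) \<longleftrightarrow> P (prefix x 0) \<and> P (prefix x 1) \<and> (\<forall>m. P (prefix x (Suc (Suc m))))"
    by (metis One_nat_def not0_implies_Suc)
  then show ?thesis unfolding prefix_Suc_Suc by (simp add: prefix_def)
qed

lemma agree_prefix: "n \<le> m \<Longrightarrow> agree n (\<lambda>i. prefix r m ! i) r"
  unfolding agree_def by simp

lemma pair_even [simp]: "pair p r (m + m) = p m"
  and pair_1 [simp]: "pair p r (Suc 0) = r 0"
  and odd_part_pair [simp]: "odd_part (pair p r) = r"
  unfolding pair_def odd_part_def by simp_all

lemma length_list_encode_le: "length xs \<le> list_encode xs"
proof (induction xs)
  case (Cons x xs)
  then show ?case using le_prod_encode_2[of "list_encode xs" x] by simp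
qed simp

lemma basic_open_0 [simp]: "basic_open 0 = {}"
  unfolding basic_open_def by simp

lemma basic_open_Suc_iff:
  "x \<in> basic_open (Suc m) \<longleftrightarrow> prefix x (length (list_decode m)) = list_decode m"
proof -
  have "x \<in> basic_open (Suc m) \<longleftrightarrow> (\<forall>i<length (list_decode m). x i = list_decode m ! i)"
    by (simp add: basic_open_def)
  also have "\<dots> \<longleftrightarrow> prefix x (length (list_decode m)) = list_decode m"
    by (metis length_prefix nth_equalityI nth_prefix)
  finally show ?thesis .
qed

lemma basic_open_extends:
  "r \<in> basic_open (Suc c) \<Longrightarrow> length (list_decode c) \<le> m \<Longrightarrow> agree m r r' \<Longrightarrow> r' \<in> basic_open (Suc c)"
  unfolding agree_def by (simp add: basic_open_def)

text \<open>The escape detector needs to decide membership of the odd part of its input in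
  basic_open (Suc m) without decoding m.  Since list_decode m has length at most m, it suffices to
  compare m with the codes of the first m + 1 prefixes of the odd part; these codes are built
  from the right, as list_encode conses.\<close>

fun odd_window_code :: "baire \<Rightarrow> nat \<Rightarrow> nat \<Rightarrow> nat" where
  "odd_window_code q 0 L = 0"
| "odd_window_code q (Suc j) L =
     Suc (prod_encode (q (Suc ((L - Suc j) + (L - Suc j))), odd_window_code q j L))"

fun prefix_code_below :: "baire \<Rightarrow> nat \<Rightarrow> nat \<Rightarrow> nat" where
  "prefix_code_below q 0 m = 0"
| "prefix_code_below q (Suc t) m = (if odd_window_code q t t = m then 1 else prefix_code_below q t m)"

definition basic_open_flag :: "baire \<Rightarrow> nat \<Rightarrow> nat" where
  "basic_open_flag q c = (if c = 0 then 0 else prefix_code_below q c (c - 1))"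

fun escape_flag :: "baire \<Rightarrow> nat \<Rightarrow> nat" where
  "escape_flag q 0 = 0"
| "escape_flag q (Suc t) = (if basic_open_flag q (q (t + t)) = 0 then escape_flag q t else 1)"

lemma odd_window_code_eq:
  "j \<le> L \<Longrightarrow> odd_window_code q j L = list_encode (map (odd_part q) [L - j..<L])"
proof (induction j)
  case (Suc j)
  then have "[L - Suc j..<L] = (L - Suc j) # [L - j..<L]"
    by (simp add: Suc_diff_Suc upt_conv_Cons)
  then show ?case using Suc by (simp add: odd_part_def)
qed simp

lemma prefix_code_below_eq:
  "prefix_code_below q t m = (if \<exists>L<t. list_encode (prefix (odd_part q) L) = m then 1 else 0)"
  by (induction t) (auto simp: odd_window_code_eq prefix_def less_Suc_eq)

lemma basic_open_flag_eq: "basic_open_flag q c = (if odd_part q \<in> basic_open c then 1 else 0)"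
proof (cases c)
  case (Suc m)
  have "(\<exists>L<Suc m. list_encode (prefix (odd_part q) L) = m) \<longleftrightarrow> odd_part q \<in> basic_open (Suc m)"
  proof
    assume "\<exists>L<Suc m. list_encode (prefix (odd_part q) L) = m"
    then obtain L where "list_decode m = prefix (odd_part q) L" by (metis list_encode_inverse)
    then show "odd_part q \<in> basic_open (Suc m)" unfolding basic_open_Suc_iff by simp
  next
    assume "odd_part q \<in> basic_open (Suc m)"
    moreover have "length (list_decode m) \<le> m"
      using length_list_encode_le[of "list_decode m"] by simp
    ultimately show "\<exists>L<Suc m. list_encode (prefix (odd_part q) L) = m"
      unfolding basic_open_Suc_iff by (metis le_imp_less_Suc list_decode_inverse)
  qed
  then show ?thesis using Suc by (simp add: basic_open_flag_def prefix_code_below_eq)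
qed (simp add: basic_open_flag_def)

lemma escape_flag_eq: "escape_flag q t = (if \<exists>m<t. odd_part q \<in> basic_open (q (m + m)) then 1 else 0)"
  by (induction t) (auto simp: basic_open_flag_eq less_Suc_eq)

definition "odd_window_prog =
  Prim Zr (Comp Sc [Comp prod_encode_prog [Comp odd_entry_prog [Comp sub_prog [Comp Sc [Proj 1], Proj 2]], Proj 0]])"

lemma computes_odd_window [computes_intros]:
  "computes q 2 odd_window_prog (\<lambda>xs. odd_window_code q (xs!0) (xs!1))"
  unfolding odd_window_prog_def
  apply (rule computes_cong_numerals, ((rule computes_intros)+ | simp)+)
  subgoal for a b by (induction a) simp_all
  done

definition "prefix_code_below_prog =
  Prim Zr (Comp cond_prog [Comp neq_prog [Comp odd_window_prog [Proj 1, Proj 1], Proj 2], Comp Sc [Zr], Proj 0])"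

lemma computes_prefix_code_below [computes_intros]:
  "computes q 2 prefix_code_below_prog (\<lambda>xs. prefix_code_below q (xs!0) (xs!1))"
  unfolding prefix_code_below_prog_def
  apply (rule computes_cong_numerals, ((rule computes_intros)+ | simp)+)
  subgoal for a b by (induction a) simp_all
  done

definition "basic_open_flag_prog =
  Comp cond_prog [Proj 0, Zr, Comp prefix_code_below_prog [Proj 0, Comp pred_prog [Proj 0]]]"

lemma computes_basic_open_flag [computes_intros]:
  "computes q 1 basic_open_flag_prog (\<lambda>xs. basic_open_flag q (xs!0))"
  unfolding basic_open_flag_prog_def
  by (rule computes_cong_numerals, ((rule computes_intros)+ | simp)+) (simp add: basic_open_flag_def)

definition "escape_flag_prog =
  Prim Zr (Comp cond_prog [Comp basic_open_flag_prog [Comp even_entry_prog [Proj 1]], Proj 0, Comp Sc [Zr]])"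

lemma computes_escape_flag [computes_intros]: "computes q 1 escape_flag_prog (\<lambda>xs. escape_flag q (xs!0))"
  unfolding escape_flag_prog_def
  apply (rule computes_cong_numerals, ((rule computes_intros)+ | simp)+)
  subgoal for a by (induction a) simp_all
  done

definition escape_detector :: "baire \<Rightarrow> baire option" where
  "escape_detector q = Some (\<lambda>n. escape_flag q (Suc n))"

lemma computable_escape_detector: "computable escape_detector"
  unfolding escape_detector_def
  by (rule computable_total, rule computes_cong_numerals(1)[where e="Comp escape_flag_prog [Comp Sc [Proj 0]]"])
    ((rule computes_intros)+ | simp)+

lemma escape_detector_pair:
  "escape_detector (pair p r) = Some (\<lambda>_. 0) \<longleftrightarrow> r \<in> closed_set p"
  by (auto simp: escape_detector_def escape_flag_eq closed_set_def fun_eq_iff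
      dest: spec[of _ "Suc _"] intro: less_SucI)

definition reduction_realizer ::
  "(baire \<Rightarrow> baire option) \<Rightarrow> (baire \<Rightarrow> baire option) \<Rightarrow> (baire \<Rightarrow> baire option) \<Rightarrow> baire \<Rightarrow> baire option" where
  "reduction_realizer H K G p =
     (case K p of None \<Rightarrow> None | Some k \<Rightarrow> (case G k of None \<Rightarrow> None | Some r \<Rightarrow> H (pair p r)))"

lemma weihrauch_le_iff:
  "weihrauch_le dX dY f dU dV g \<longleftrightarrow>
     (\<exists>H K. computable H \<and> computable K \<and>
        (\<forall>G. realizes dU dV g G \<longrightarrow> realizes dX dY f (reduction_realizer H K G)))"
  unfolding weihrauch_le_def reduction_realizer_def[abs_def] by simp

lemma realizes_reduction_realizerD:
  assumes "realizes dX dY f (reduction_realizer H K G)" and "dX p = Some x" and "f x \<noteq> {}"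
  obtains k r q y where "K p = Some k" "G k = Some r" "H (pair p r) = Some q" "dY q = Some y" "y \<in> f x"
  using assms unfolding realizes_def reduction_realizer_def by (fastforce split: option.splits)

lemma totalization_C_baire_mem_iff: "r \<in> totalization C_baire A \<Longrightarrow> r \<in> A \<longleftrightarrow> A \<noteq> {}"
  unfolding totalization_def C_baire_def by (auto split: if_splits)

lemma totalization_C_baire_nonempty: "totalization C_baire A \<noteq> {}"
  unfolding totalization_def C_baire_def by auto

lemma realizes_TC_iff:
  "realizes delta_closed delta_baire (totalization C_baire) G \<longleftrightarrow>
     (\<forall>k. \<exists>r. G k = Some r \<and> r \<in> totalization C_baire (closed_set k))"
  unfolding realizes_def delta_closed_eq delta_baire_def totalization_def C_baire_def by auto

lemma escape_detector_after_TC: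
  assumes "realizes delta_closed delta_baire (totalization C_baire) G"
  obtains s where "reduction_realizer escape_detector Some G p = Some s"
    and "s = (\<lambda>_. 0) \<longleftrightarrow> closed_set p \<noteq> {}"
proof -
  obtain r where r: "G p = Some r" "r \<in> totalization C_baire (closed_set p)"
    using assms realizes_TC_iff by blast
  have "r \<in> closed_set p \<longleftrightarrow> closed_set p \<noteq> {}"
    using r(2) by (rule totalization_C_baire_mem_iff)
  then show ?thesis
    using that escape_detector_pair[of p r] r(1)
    by (auto simp: reduction_realizer_def escape_detector_def)
qed

text \<open>Any valid answer r to the name computed by K can be fed to the reduction, because the realizer
  of the right-hand problem may be modified to return r on that one name.\<close>

lemma weihrauch_reduction_machines:
  assumes "weihrauch_le dX dY f dU dV g"
    and total: "\<And>p. \<exists>x. dX p = Some x \<and> f x \<noteq> {}"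
    and answers: "\<And>k. answers k \<noteq> {}"
    and realizer: "\<And>G. (\<forall>k. \<exists>r. G k = Some r \<and> r \<in> answers k) \<Longrightarrow> realizes dU dV g G"
  obtains eH eK k where "\<And>p i. ev p eK [i] (k p i)"
    and "\<And>p x r. dX p = Some x \<Longrightarrow> r \<in> answers (k p) \<Longrightarrow>
           \<exists>q y. (\<forall>n. ev (pair p r) eH [n] (q n)) \<and> dY q = Some y \<and> y \<in> f x"
proof -
  obtain H K where "computable H" "computable K"
    and red: "\<And>G. realizes dU dV g G \<Longrightarrow> realizes dX dY f (reduction_realizer H K G)"
    using assms(1) unfolding weihrauch_le_iff by blast
  then obtain eH eK where eH: "\<And>u q n. H u = Some q \<Longrightarrow> ev u eH [n] (q n)"
    and eK: "\<And>p k n. K p = Some k \<Longrightarrow> ev p eK [n] (k n)"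
    unfolding computable_def by blast
  define G0 where "G0 k = Some (SOME r. r \<in> answers k)" for k
  have G0: "realizes dU dV g (G0(k := Some r))" if "r \<in> answers k" for k r
    using that answers some_in_eq by (intro realizer) (auto simp: G0_def)
  have answer_response: "\<exists>q y. H (pair p r) = Some q \<and> dY q = Some y \<and> y \<in> f x"
    if x: "dX p = Some x" and nonempty: "f x \<noteq> {}" and K: "K p = Some k" and r: "r \<in> answers k"
    for p x k r
  proof -
    obtain k' r' q y where "K p = Some k'" "(G0(k := Some r)) k' = Some r'"
      "H (pair p r') = Some q" "dY q = Some y" "y \<in> f x"
      by (rule realizes_reduction_realizerD[OF red[OF G0[OF r]] x nonempty])
    then show ?thesis using K by auto
  qed
  define k where "k p = the (K p)" for p
  have K: "K p = Some (k p)" for p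
  proof -
    obtain x r where "dX p = Some x" "f x \<noteq> {}" "r \<in> answers p"
      using total answers by blast
    then show ?thesis
      using realizes_reduction_realizerD[OF red[OF G0]] unfolding k_def by (metis option.sel)
  qed
  show ?thesis
  proof
    show "ev p eK [i] (k p i)" for p i by (rule eK[OF K])
  next
    fix p x r assume x: "dX p = Some x" and r: "r \<in> answers (k p)"
    have "f x \<noteq> {}" using total[of p] x by auto
    then show "\<exists>q y. (\<forall>n. ev (pair p r) eH [n] (q n)) \<and> dY q = Some y \<and> y \<in> f x"
      using answer_response[OF x _ K r] eH by blast
  qed
qed

lemma WFT_sierp_le_TC:
  "weihrauch_le delta_closed delta_sierp WFT delta_closed delta_baire (totalization C_baire)"
  unfolding weihrauch_le_iff
proof (intro exI conjI allI impI)
  fix G assume G: "realizes delta_closed delta_baire (totalization C_baire) G"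
  have "\<exists>s. reduction_realizer escape_detector Some G p = Some s \<and>
      delta_sierp s = Some (if closed_set p = {} then 1 else 0)" for p
    by (rule escape_detector_after_TC[OF G, of p]) (auto simp: delta_sierp_def)
  then show "realizes delta_closed delta_sierp WFT (reduction_realizer escape_detector Some G)"
    unfolding realizes_def delta_closed_eq WFT_def by auto
qed (rule computable_escape_detector computable_id)+

definition cylinder_code :: "nat \<Rightarrow> nat" where
  "cylinder_code a = Suc (list_encode [a])"

definition witness_set_name :: "baire \<Rightarrow> baire" where
  "witness_set_name y = (\<lambda>j. if y j = 0 then cylinder_code (Suc j) else cylinder_code 0)"

definition sierp_decision :: "baire \<Rightarrow> baire set" where
  "sierp_decision y = {q. q 0 = (if y = (\<lambda>_. 0) then 0 else 1)}"

definition nonempty_sierp :: "baire \<Rightarrow> baire set" where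
  "nonempty_sierp p = {s. s = (\<lambda>_. 0) \<longleftrightarrow> closed_set p \<noteq> {}}"

lemma basic_open_cylinder_code: "basic_open (cylinder_code a) = {x. x 0 = a}"
  unfolding cylinder_code_def basic_open_def by simp

lemma mem_closed_witness_set:
  "d \<in> closed_set (witness_set_name y) \<longleftrightarrow> (\<forall>j. (y j = 0 \<longrightarrow> d 0 \<noteq> Suc j) \<and> (y j \<noteq> 0 \<longrightarrow> d 0 \<noteq> 0))"
  unfolding closed_set_def witness_set_name_def by (auto simp: basic_open_cylinder_code split: if_splits)

lemma closed_witness_set_nonempty: "closed_set (witness_set_name y) \<noteq> {}"
proof (cases "y = (\<lambda>_. 0)")
  case True
  then have "(\<lambda>_. 0) \<in> closed_set (witness_set_name y)" by (simp add: mem_closed_witness_set)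
  then show ?thesis by blast
next
  case False
  then obtain i where "y i \<noteq> 0" by auto
  then have "(\<lambda>_. Suc i) \<in> closed_set (witness_set_name y)" by (auto simp: mem_closed_witness_set)
  then show ?thesis by blast
qed

lemma witness_set_first_entry:
  "d \<in> closed_set (witness_set_name y) \<Longrightarrow> d 0 = 0 \<longleftrightarrow> y = (\<lambda>_. 0)"
  unfolding mem_closed_witness_set by (cases "d 0") auto

lemma realizes_C_iff:
  "realizes delta_closed delta_baire C_baire G \<longleftrightarrow>
     (\<forall>k. closed_set k \<noteq> {} \<longrightarrow> (\<exists>d. G k = Some d \<and> d \<in> closed_set k))"
  unfolding realizes_def delta_closed_eq delta_baire_def C_baire_def by auto

lemma computable_witness_set_name: "computable (\<lambda>y. Some (witness_set_name y))"
proof (rule computable_total)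
  fix q
  show "computes q 1 (Comp cond_prog [Orc, Comp Sc [Comp Sc [Comp prod_encode_prog [Sc, Zr]]], Comp Sc [Comp Sc [Zr]]])
      (\<lambda>xs. witness_set_name q (xs!0))"
    by (rule computes_cong_numerals, ((rule computes_intros)+ | simp)+)
      (simp add: witness_set_name_def cylinder_code_def prod_encode_def)
qed

definition first_answer_flag :: "baire \<Rightarrow> baire option" where
  "first_answer_flag q = Some (\<lambda>_. if q 1 = 0 then 0 else 1)"

lemma computable_first_answer_flag: "computable first_answer_flag"
  unfolding first_answer_flag_def
  by (rule computable_total, rule computes_cong_numerals(1)[where e="Comp sgn_prog [Comp Orc [Comp Sc [Zr]]]"])
    ((rule computes_intros)+ | simp)+

lemma sierp_decision_le_C:
  "weihrauch_le delta_baire delta_baire sierp_decision delta_closed delta_baire C_baire"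
  unfolding weihrauch_le_iff
proof (intro exI conjI allI impI)
  fix G assume G: "realizes delta_closed delta_baire C_baire G"
  have "\<exists>q. reduction_realizer first_answer_flag (\<lambda>y. Some (witness_set_name y)) G y = Some q \<and>
      q \<in> sierp_decision y" for y
  proof -
    obtain d where "G (witness_set_name y) = Some d" "d \<in> closed_set (witness_set_name y)"
      using G closed_witness_set_nonempty realizes_C_iff by blast
    then show ?thesis
      using witness_set_first_entry
      by (simp add: reduction_realizer_def first_answer_flag_def sierp_decision_def)
  qed
  then show "realizes delta_baire delta_baire sierp_decision
      (reduction_realizer first_answer_flag (\<lambda>y. Some (witness_set_name y)) G)"
    unfolding realizes_def delta_baire_def by auto
qed (rule computable_first_answer_flag computable_witness_set_name)+

lemma nonempty_sierp_le_TC: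
  "weihrauch_le delta_baire delta_baire nonempty_sierp delta_closed delta_baire (totalization C_baire)"
  unfolding weihrauch_le_iff
proof (intro exI conjI allI impI)
  fix G assume G: "realizes delta_closed delta_baire (totalization C_baire) G"
  have "\<exists>s. reduction_realizer escape_detector Some G p = Some s \<and> s \<in> nonempty_sierp p" for p
    by (rule escape_detector_after_TC[OF G, of p]) (auto simp: nonempty_sierp_def)
  then show "realizes delta_baire delta_baire nonempty_sierp (reduction_realizer escape_detector Some G)"
    unfolding realizes_def delta_baire_def by auto
qed (rule computable_escape_detector computable_id)+

lemma WFT_le_decision_after_nonempty:
  "weihrauch_le delta_closed delta_two WFT delta_baire delta_baire (pcomp sierp_decision nonempty_sierp)"
  unfolding weihrauch_le_iff
proof (intro exI conjI allI impI)
  fix G assume G: "realizes delta_baire delta_baire (pcomp sierp_decision nonempty_sierp) G"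
  have "(\<lambda>_. if closed_set p \<noteq> {} then 0 else 1) \<in> nonempty_sierp p" for p
    by (auto simp: nonempty_sierp_def fun_eq_iff)
  moreover have "sierp_decision s \<noteq> {}" for s
    by (auto simp: sierp_decision_def)
  ultimately have "pcomp sierp_decision nonempty_sierp p \<noteq> {}" for p
    unfolding pcomp_def by (simp add: ex_in_conv[symmetric]) blast
  have "\<exists>q. reduction_realizer (\<lambda>q. Some (odd_part q)) Some G p = Some q \<and>
      delta_two q = Some (if closed_set p = {} then 1 else 0)" for p
  proof -
    obtain q where q: "G p = Some q" "q \<in> pcomp sierp_decision nonempty_sierp p"
      using G \<open>pcomp sierp_decision nonempty_sierp p \<noteq> {}\<close> unfolding realizes_def delta_baire_def by blast
    then have "q 0 = (if closed_set p = {} then 1 else 0)"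
      unfolding pcomp_def sierp_decision_def nonempty_sierp_def by (auto split: if_splits)
    then show ?thesis using q(1) by (simp add: reduction_realizer_def delta_two_def)
  qed
  then show "realizes delta_closed delta_two WFT (reduction_realizer (\<lambda>q. Some (odd_part q)) Some G)"
    unfolding realizes_def delta_closed_eq WFT_def by auto
next
  show "computable (\<lambda>q. Some (odd_part q))"
    by (rule computable_total, rule computes_cong_numerals(1)[OF computes_odd_entry])
      (simp add: odd_part_def)
qed (rule computable_id)

lemma WFT_le_C_star_TC:
  "weihrauch_le_cprod delta_closed delta_two WFT delta_closed delta_baire C_baire
     delta_closed delta_baire (totalization C_baire)"
  unfolding weihrauch_le_cprod_def
  using sierp_decision_le_C nonempty_sierp_le_TC WFT_le_decision_after_nonempty by blast

section \<open>Self-referential names of closed sets\<close>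

primrec causal_prefix :: "(baire \<Rightarrow> nat \<Rightarrow> nat) \<Rightarrow> nat \<Rightarrow> nat list" where
  "causal_prefix P 0 = []"
| "causal_prefix P (Suc s) =
     causal_prefix P s @ [P (\<lambda>i. if i < s then causal_prefix P s ! i else 0) s]"

lemma length_causal_prefix [simp]: "length (causal_prefix P s) = s"
  by (induction s) auto

lemma causal_prefix_nth: "i < s \<Longrightarrow> s \<le> t \<Longrightarrow> causal_prefix P t ! i = causal_prefix P s ! i"
  by (induction t) (auto simp: nth_append le_Suc_eq)

lemma causal_fixpoint:
  assumes causal: "\<And>p p' s. agree s p p' \<Longrightarrow> P p s = P p' s"
  obtains p where "\<And>s. p s = P p s"
proof
  define p where "p i = causal_prefix P (Suc i) ! i" for i
  fix s
  define e where "e = (\<lambda>i. if i < s then causal_prefix P s ! i else 0)"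
  have "agree s e p"
    unfolding agree_def
  proof (intro allI impI)
    fix i assume "i < s"
    then show "p i = e i"
      using causal_prefix_nth[of i "Suc i" s P] by (simp add: p_def e_def del: causal_prefix.simps)
  qed
  then have "P e s = P p s" by (rule causal)
  moreover have "p s = P e s" by (simp add: p_def e_def nth_append)
  ultimately show "p s = P p s" by simp
qed

text \<open>Kleene's recursion theorem for names of closed sets: a name may refer to itself, as long as
  whether the cylinder of \<sigma> is removed depends only on the first length \<sigma> entries of the name.\<close>

lemma closed_set_fixpoint:
  assumes causal: "\<And>p p' \<sigma>. agree (length \<sigma>) p p' \<Longrightarrow> bad p \<sigma> = bad p' \<sigma>"
  obtains p where "closed_set p = {x. \<forall>n. \<not> bad p (prefix x n)}"
proof -
  define P where "P p s = (if bad p (list_decode s) then Suc s else 0)" for p s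
  have causal_P: "P p s = P p' s" if "agree s p p'" for p p' s
  proof -
    have "agree (length (list_decode s)) p p'"
      using agree_mono[OF that] length_list_encode_le[of "list_decode s"] by simp
    then show ?thesis unfolding P_def by (simp add: causal)
  qed
  obtain p where p: "\<And>s. p s = P p s" using causal_fixpoint[of P] causal_P by metis
  have "x \<notin> closed_set p \<longleftrightarrow> (\<exists>n. bad p (prefix x n))" for x
  proof
    assume "x \<notin> closed_set p"
    then obtain s where "x \<in> basic_open (p s)" unfolding closed_set_def by auto
    then have "bad p (list_decode s)" and "prefix x (length (list_decode s)) = list_decode s"
      using p unfolding P_def by (auto simp: basic_open_Suc_iff split: if_splits)
    then show "\<exists>n. bad p (prefix x n)" by metis
  next
    assume "\<exists>n. bad p (prefix x n)"
    then obtain n where "bad p (list_decode (list_encode (prefix x n)))" by auto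
    then have "x \<in> basic_open (p (list_encode (prefix x n)))"
      using p unfolding P_def by (simp add: basic_open_Suc_iff)
    then show "x \<notin> closed_set p" unfolding closed_set_def by blast
  qed
  then show ?thesis using that by blast
qed

definition certified_cover :: "recf \<Rightarrow> (nat \<Rightarrow> nat) \<Rightarrow> baire \<Rightarrow> nat \<Rightarrow> nat list \<Rightarrow> bool" where
  "certified_cover e f p L \<rho> \<longleftrightarrow> (\<exists>i<L. \<exists>v. (\<forall>p'. agree L p p' \<longrightarrow> ev p' e [i] v) \<and>
       (\<forall>r'. (\<forall>j<length \<rho>. r' j = \<rho> ! j) \<longrightarrow> r' \<in> basic_open (f v)))"

lemma certified_cover_causal: "agree L p p' \<Longrightarrow> certified_cover e f p L \<rho> = certified_cover e f p' L \<rho>"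
  unfolding certified_cover_def using agree_sym agree_trans by blast

lemma certified_cover_iff:
  assumes k: "\<And>i. ev p e [i] (k i)"
  shows "(\<exists>m. certified_cover e f p (m + d) (prefix r m)) \<longleftrightarrow> r \<notin> closed_set (\<lambda>i. f (k i))"
proof
  assume "\<exists>m. certified_cover e f p (m + d) (prefix r m)"
  then obtain m i v where certified: "\<forall>p'. agree (m + d) p p' \<longrightarrow> ev p' e [i] v"
    and cover: "\<forall>r'. (\<forall>j<m. r' j = r j) \<longrightarrow> r' \<in> basic_open (f v)"
    unfolding certified_cover_def by auto
  from certified have "ev p e [i] v" by simp
  then have "v = k i" using k by (rule ev_deterministic)
  with cover have "r \<in> basic_open (f (k i))" by blast
  then show "r \<notin> closed_set (\<lambda>i. f (k i))" unfolding closed_set_def by blast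
next
  assume "r \<notin> closed_set (\<lambda>i. f (k i))"
  then obtain i where "r \<in> basic_open (f (k i))" unfolding closed_set_def by blast
  moreover obtain c where c: "f (k i) = Suc c"
    using calculation by (cases "f (k i)") auto
  ultimately have r: "r \<in> basic_open (Suc c)" by simp
  obtain N where N: "\<And>p'. agree N p p' \<Longrightarrow> ev p' e [i] (k i)"
    using ev_continuous[OF k] unfolding near_def by blast
  define m where "m = max N (max (Suc i) (length (list_decode c)))"
  have "certified_cover e f p (m + d) (prefix r m)"
    unfolding certified_cover_def
  proof (intro exI conjI allI impI)
    show "i < m + d" unfolding m_def by simp
    show "ev p' e [i] (k i)" if "agree (m + d) p p'" for p'
      using N agree_mono[OF that] unfolding m_def by simp
    show "r' \<in> basic_open (f (k i))" if "\<forall>j<length (prefix r m). r' j = prefix r m ! j" for r'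
      using basic_open_extends[OF r, of m r'] that c unfolding m_def agree_def by simp
  qed
  then show "\<exists>m. certified_cover e f p (m + d) (prefix r m)" by blast
qed

section \<open>Admissible answers of the completion of choice\<close>

definition infinitely_nonzero :: "baire \<Rightarrow> bool" where
  "infinitely_nonzero k \<longleftrightarrow> infinite {n. 0 < k n}"

definition completed_answer :: "baire \<Rightarrow> baire \<Rightarrow> bool" where
  "completed_answer k q \<longleftrightarrow>
     (infinitely_nonzero k \<and> closed_set (minus_one k) \<noteq> {} \<longrightarrow>
        infinitely_nonzero q \<and> minus_one q \<in> closed_set (minus_one k))"

text \<open>A name of x in the completion that agrees with the name 0^\<omega> of \<bottom> for N steps.\<close>

definition delayed_name :: "baire \<Rightarrow> nat \<Rightarrow> baire" where
  "delayed_name x N = (\<lambda>n. if n < N then 0 else Suc (x (n - N)))"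

lemma enumerate_atLeast: "enumerate {M::nat..} k = M + k"
proof (induction k arbitrary: M)
  case 0
  then show ?case by (simp add: enumerate_0 Least_equality)
next
  case (Suc k)
  have "(LEAST n. M \<le> n) = M" by (simp add: Least_equality)
  moreover have "{M..} - {M} = {Suc M..}" by auto
  ultimately show ?case using Suc[of "Suc M"] by (simp add: enumerate_Suc)
qed

lemma delayed_name_nonzero: "{n. 0 < delayed_name x N n} = {N..}"
  unfolding delayed_name_def by auto

lemma infinitely_nonzero_delayed_name: "infinitely_nonzero (delayed_name x N)"
  unfolding infinitely_nonzero_def delayed_name_nonzero infinite_nat_iff_unbounded_le
  by (meson atLeast_iff nat_le_linear)

lemma minus_one_delayed_name: "minus_one (delayed_name x N) = x"
  unfolding minus_one_def delayed_name_nonzero enumerate_atLeast by (simp add: delayed_name_def)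

lemma delayed_name_0: "delayed_name x 0 = (\<lambda>i. Suc (x i))"
  unfolding delayed_name_def by simp

lemma agree_delayed_name: "agree N (\<lambda>_. 0) (delayed_name x N)"
  unfolding agree_def delayed_name_def by simp

lemma closed_set_minus_one:
  assumes "infinitely_nonzero k"
  shows "closed_set (minus_one k) = closed_set (\<lambda>n. k n - 1)"
proof -
  have "range (enumerate {n. 0 < k n}) = {n. 0 < k n}"
    using assms unfolding infinitely_nonzero_def by (rule range_enumerate)
  moreover have "(\<Union>m. basic_open (minus_one k m)) =
      (\<Union>n\<in>range (enumerate {n. 0 < k n}). basic_open (k n - 1))"
    unfolding minus_one_def by auto
  ultimately have "(\<Union>m. basic_open (minus_one k m)) = (\<Union>n\<in>{n. 0 < k n}. basic_open (k n - 1))"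
    by simp
  also have "\<dots> = (\<Union>n. basic_open (k n - 1))"
  proof -
    have "basic_open (k n - 1) = {}" if "\<not> 0 < k n" for n using that by simp
    then show ?thesis by blast
  qed
  finally show ?thesis unfolding closed_set_def by simp
qed

lemma completed_answer_delayed_name:
  "x \<in> closed_set (\<lambda>n. k n - 1) \<Longrightarrow> completed_answer k (delayed_name x N)"
  unfolding completed_answer_def
  by (simp add: closed_set_minus_one infinitely_nonzero_delayed_name minus_one_delayed_name)

lemma completed_answer_bot_or_point:
  "completed_answer k (\<lambda>_. 0) \<or> (\<exists>x. x \<in> closed_set (\<lambda>n. k n - 1))"
  unfolding completed_answer_def using closed_set_minus_one by auto

lemma completion_delta_closed:
  "completion delta_closed k = Some (if infinitely_nonzero k then Some (closed_set (minus_one k)) else None)"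
  and completion_delta_baire:
  "completion delta_baire q = Some (if infinitely_nonzero q then Some (minus_one q) else None)"
  unfolding completion_def infinitely_nonzero_def delta_closed_eq delta_baire_def by simp_all

lemma completed_answer_exists: "\<exists>q. completed_answer k q"
  using completed_answer_bot_or_point completed_answer_delayed_name by blast

lemma completed_answer_near_bot:
  assumes "ev (pair p (\<lambda>_. 0)) e [j] v"
  obtains q where "completed_answer k q" and "ev (pair p q) e [j] v"
proof (cases "completed_answer k (\<lambda>_. 0)")
  case False
  then obtain x where x: "x \<in> closed_set (\<lambda>n. k n - 1)"
    using completed_answer_bot_or_point by blast
  obtain N where "certified_output e p (\<lambda>_. 0) j v N"
    using assms ex_certified_output_iff by blast
  then have "ev (pair p (delayed_name x N)) e [j] v"
    using certified_output_cong[OF agree_delayed_name] ex_certified_output_iff by blast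
  with completed_answer_delayed_name[OF x] that show ?thesis by blast
qed (use assms that in blast)

lemma realizes_completion_C:
  assumes "\<forall>k. \<exists>q. G k = Some q \<and> completed_answer k q"
  shows "realizes (completion delta_closed) (completion delta_baire) (pcompletion C_baire) G"
  unfolding realizes_def
proof (intro allI impI)
  fix k x assume "completion delta_closed k = Some x \<and> pcompletion C_baire x \<noteq> {}"
  then have x: "x = (if infinitely_nonzero k then Some (closed_set (minus_one k)) else None)"
    by (simp add: completion_delta_closed)
  from assms obtain q where q: "G k = Some q" "completed_answer k q" by blast
  show "\<exists>q y. G k = Some q \<and> completion delta_baire q = Some y \<and> y \<in> pcompletion C_baire x"
  proof (cases "infinitely_nonzero k \<and> closed_set (minus_one k) \<noteq> {}")
    case True
    then have "infinitely_nonzero q" and "minus_one q \<in> closed_set (minus_one k)"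
      using q(2) unfolding completed_answer_def by auto
    then show ?thesis
      using q(1) True x by (simp add: completion_delta_baire pcompletion_def C_baire_def)
  next
    case False
    then have "pcompletion C_baire x = UNIV"
      using x by (auto simp: pcompletion_def C_baire_def)
    then show ?thesis using q(1) by (simp add: completion_delta_baire)
  qed
qed

section \<open>Diagonal closed sets against a pair of machines\<close>

locale machine_pair =
  fixes eH eK :: recf and k :: "baire \<Rightarrow> baire"
  assumes ev_k: "\<And>p i. ev p eK [i] (k p i)"
begin

text \<open>Points of the diagonal set against TC are 0 # \<dots>, surviving iff no sequence whatsoever
  makes eH call the set nonempty, and 1 # n # r, surviving iff r is a point of the set named by
  k p on which eH calls the set empty with use at most n.\<close>

fun TC_diagonal_bad :: "baire \<Rightarrow> nat list \<Rightarrow> bool" where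
  "TC_diagonal_bad p [] = False"
| "TC_diagonal_bad p (0 # \<tau>) = (\<exists>r. certified_output eH p r 0 0 (Suc (length \<tau>)))"
| "TC_diagonal_bad p [Suc 0] = False"
| "TC_diagonal_bad p (Suc 0 # n # \<rho>) =
     ((n \<le> length \<rho> \<and> \<not> certified_output eH p (\<lambda>i. \<rho> ! i) 0 1 n) \<or>
      certified_cover eK id p (length \<rho> + 2) \<rho>)"
| "TC_diagonal_bad p (Suc (Suc _) # _) = True"

lemma TC_diagonal_bad_causal: "agree (length \<sigma>) p p' \<Longrightarrow> TC_diagonal_bad p \<sigma> = TC_diagonal_bad p' \<sigma>"
proof (induction p \<sigma> rule: TC_diagonal_bad.induct)
  case (2 p \<tau>)
  then show ?case using certified_output_causal by simp
next
  case (4 p n \<rho>)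
  then have agree_p: "agree (length \<rho> + 2) p p'" by simp
  have "certified_output eH p (\<lambda>i. \<rho> ! i) 0 1 n = certified_output eH p' (\<lambda>i. \<rho> ! i) 0 1 n"
    if "n \<le> length \<rho>"
    using that agree_mono[OF agree_p] by (intro certified_output_causal) simp
  then show ?case using certified_cover_causal[OF agree_p] by auto
qed auto

lemma not_TC_diagonal_bad_iff:
  "(\<forall>n. \<not> TC_diagonal_bad p (prefix x n)) \<longleftrightarrow>
     (x 0 = 0 \<and> (\<forall>r. \<not> ev (pair p r) eH [0] 0)) \<or>
     (x 0 = 1 \<and> certified_output eH p (\<lambda>i. x (Suc (Suc i))) 0 1 (x 1) \<and>
      (\<lambda>i. x (Suc (Suc i))) \<in> closed_set (k p))"
  (is "?lhs \<longleftrightarrow> _")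
proof -
  define r where "r = (\<lambda>i. x (Suc (Suc i)))"
  have lhs: "?lhs \<longleftrightarrow> \<not> TC_diagonal_bad p [x 0] \<and> (\<forall>m. \<not> TC_diagonal_bad p (x 0 # x 1 # prefix r m))"
    unfolding all_prefixes[of "\<lambda>\<sigma>. \<not> TC_diagonal_bad p \<sigma>"] r_def by simp
  consider "x 0 = 0" | "x 0 = 1" | j where "x 0 = Suc (Suc j)"
    by (metis One_nat_def not0_implies_Suc)
  then show ?thesis
  proof cases
    case 1
    have "?lhs \<longleftrightarrow> (\<forall>L. \<not> (\<exists>r. certified_output eH p r 0 0 L))"
      unfolding lhs 1 using certified_output_mono
      by simp (metis Suc_n_not_le_n add_2_eq_Suc' nat_le_linear)
    also have "\<dots> \<longleftrightarrow> (\<forall>r. \<not> ev (pair p r) eH [0] 0)"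
      using ex_certified_output_iff by blast
    finally show ?thesis using 1 by simp
  next
    case 2
    have "(\<forall>m. x 1 \<le> m \<longrightarrow> certified_output eH p (\<lambda>i. prefix r m ! i) 0 1 (x 1)) \<longleftrightarrow>
        certified_output eH p r 0 1 (x 1)"
      using certified_output_cong[OF agree_prefix] by blast
    moreover have "(\<forall>m. \<not> certified_cover eK id p (m + 2) (prefix r m)) \<longleftrightarrow> r \<in> closed_set (k p)"
      using certified_cover_iff[of p eK "k p", OF ev_k, of id 2 r] by auto
    ultimately show ?thesis unfolding lhs 2 r_def by auto
  qed (simp add: lhs)
qed

lemma TC_diagonal:
  obtains p where "closed_set p \<noteq> {} \<longleftrightarrow>
    (\<forall>r. \<not> ev (pair p r) eH [0] 0) \<or> (\<exists>r\<in>closed_set (k p). ev (pair p r) eH [0] 1)"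
proof -
  obtain p where p: "closed_set p = {x. \<forall>n. \<not> TC_diagonal_bad p (prefix x n)}"
    using closed_set_fixpoint[of TC_diagonal_bad, OF TC_diagonal_bad_causal] by blast
  have "closed_set p \<noteq> {} \<longleftrightarrow>
    (\<forall>r. \<not> ev (pair p r) eH [0] 0) \<or> (\<exists>r\<in>closed_set (k p). ev (pair p r) eH [0] 1)"
  proof
    assume "closed_set p \<noteq> {}"
    then obtain x where "x \<in> closed_set p" by blast
    then have "(x 0 = 0 \<and> (\<forall>r. \<not> ev (pair p r) eH [0] 0)) \<or>
      (x 0 = 1 \<and> certified_output eH p (\<lambda>i. x (Suc (Suc i))) 0 1 (x 1) \<and>
       (\<lambda>i. x (Suc (Suc i))) \<in> closed_set (k p))"
      using p not_TC_diagonal_bad_iff[of p x] by simp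
    then show "(\<forall>r. \<not> ev (pair p r) eH [0] 0) \<or> (\<exists>r\<in>closed_set (k p). ev (pair p r) eH [0] 1)"
      using ex_certified_output_iff by blast
  next
    assume "(\<forall>r. \<not> ev (pair p r) eH [0] 0) \<or> (\<exists>r\<in>closed_set (k p). ev (pair p r) eH [0] 1)"
    then show "closed_set p \<noteq> {}"
    proof
      assume "\<forall>r. \<not> ev (pair p r) eH [0] 0"
      then have "(\<lambda>_. 0) \<in> closed_set p" using p not_TC_diagonal_bad_iff[of p "\<lambda>_. 0"] by simp
      then show ?thesis by blast
    next
      assume "\<exists>r\<in>closed_set (k p). ev (pair p r) eH [0] 1"
      then obtain r n where "r \<in> closed_set (k p)" "certified_output eH p r 0 1 n"
        using ex_certified_output_iff by blast
      moreover define x where "x i = (if i = 0 then 1 else if i = 1 then n else r (i - 2))" for i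
      ultimately have "x \<in> closed_set p"
        using p not_TC_diagonal_bad_iff[of p x] by (simp add: x_def)
      then show ?thesis by blast
    qed
  qed
  then show ?thesis using that by blast
qed

text \<open>Points of the diagonal set against the completion are 0 # n # \<dots>, surviving iff eH on
  the name 0^\<omega> of \<bottom> outputs something nonzero with use at most n, and 1 # j # r, surviving iff
  r is a point of the set named by \<lambda>i. k p i - 1 and eH does not output 0 at position j on
  Suc \<circ> r.\<close>

fun completion_diagonal_bad :: "baire \<Rightarrow> nat list \<Rightarrow> bool" where
  "completion_diagonal_bad p [] = False"
| "completion_diagonal_bad p [0] = False"
| "completion_diagonal_bad p (0 # n # \<tau>) =
     (n \<le> length \<tau> \<and> \<not> (\<exists>j v. v \<noteq> 0 \<and> certified_output eH p (\<lambda>_. 0) j v n))"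
| "completion_diagonal_bad p [Suc 0] = False"
| "completion_diagonal_bad p (Suc 0 # j # \<rho>) =
     (certified_cover eK (\<lambda>v. v - 1) p (length \<rho> + 2) \<rho> \<or>
      certified_output eH p (\<lambda>i. Suc (\<rho> ! i)) j 0 (length \<rho>))"
| "completion_diagonal_bad p (Suc (Suc _) # _) = True"

lemma completion_diagonal_bad_causal:
  "agree (length \<sigma>) p p' \<Longrightarrow> completion_diagonal_bad p \<sigma> = completion_diagonal_bad p' \<sigma>"
proof (induction p \<sigma> rule: completion_diagonal_bad.induct)
  case (3 p n \<tau>)
  then have agree_p: "agree (length \<tau> + 2) p p'" by simp
  have "certified_output eH p (\<lambda>_. 0) j v n = certified_output eH p' (\<lambda>_. 0) j v n"
    if "n \<le> length \<tau>" for j v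
    using that agree_mono[OF agree_p] by (intro certified_output_causal) simp
  then show ?case by simp metis
next
  case (5 p j \<rho>)
  then have agree_p: "agree (length \<rho> + 2) p p'" by simp
  then have "certified_output eH p (\<lambda>i. Suc (\<rho> ! i)) j 0 (length \<rho>) =
      certified_output eH p' (\<lambda>i. Suc (\<rho> ! i)) j 0 (length \<rho>)"
    using agree_mono by (intro certified_output_causal) simp
  then show ?case using certified_cover_causal[OF agree_p] by simp
qed auto

lemma certified_output_Suc_prefix_iff:
  "(\<exists>m. certified_output e p (\<lambda>i. Suc (prefix r m ! i)) j v m) \<longleftrightarrow> ev (pair p (\<lambda>i. Suc (r i))) e [j] v"
proof -
  have "agree m (\<lambda>i. Suc (prefix r m ! i)) (\<lambda>i. Suc (r i))" for m
    unfolding agree_def by simp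
  then have "certified_output e p (\<lambda>i. Suc (prefix r m ! i)) j v m \<longleftrightarrow>
      certified_output e p (\<lambda>i. Suc (r i)) j v m" for m
    by (rule certified_output_cong)
  then show ?thesis using ex_certified_output_iff by simp
qed

lemma not_completion_diagonal_bad_iff:
  "(\<forall>n. \<not> completion_diagonal_bad p (prefix x n)) \<longleftrightarrow>
     (x 0 = 0 \<and> (\<exists>j v. v \<noteq> 0 \<and> certified_output eH p (\<lambda>_. 0) j v (x 1))) \<or>
     (x 0 = 1 \<and> (\<lambda>i. x (Suc (Suc i))) \<in> closed_set (\<lambda>i. k p i - 1) \<and>
      \<not> ev (pair p (\<lambda>i. Suc (x (Suc (Suc i))))) eH [x 1] 0)"
  (is "?lhs \<longleftrightarrow> _")
proof -
  define r where "r = (\<lambda>i. x (Suc (Suc i)))"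
  have lhs: "?lhs \<longleftrightarrow> \<not> completion_diagonal_bad p [x 0] \<and>
      (\<forall>m. \<not> completion_diagonal_bad p (x 0 # x 1 # prefix r m))"
    unfolding all_prefixes[of "\<lambda>\<sigma>. \<not> completion_diagonal_bad p \<sigma>"] r_def by simp
  consider "x 0 = 0" | "x 0 = 1" | j where "x 0 = Suc (Suc j)"
    by (metis One_nat_def not0_implies_Suc)
  then show ?thesis
  proof cases
    case 1
    have "(\<forall>m. x 1 \<le> m \<longrightarrow> (\<exists>j v. v \<noteq> 0 \<and> certified_output eH p (\<lambda>_. 0) j v (x 1))) \<longleftrightarrow>
        (\<exists>j v. v \<noteq> 0 \<and> certified_output eH p (\<lambda>_. 0) j v (x 1))"
      by blast
    then show ?thesis unfolding lhs 1 by simp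
  next
    case 2
    have "(\<forall>m. \<not> certified_cover eK (\<lambda>v. v - 1) p (m + 2) (prefix r m)) \<longleftrightarrow>
        r \<in> closed_set (\<lambda>i. k p i - 1)"
      using certified_cover_iff[of p eK "k p", OF ev_k, of "\<lambda>v. v - 1" 2 r] by auto
    moreover have "(\<forall>m. \<not> certified_output eH p (\<lambda>i. Suc (prefix r m ! i)) (x 1) 0 m) \<longleftrightarrow>
        \<not> ev (pair p (\<lambda>i. Suc (r i))) eH [x 1] 0"
      using certified_output_Suc_prefix_iff by blast
    ultimately show ?thesis unfolding lhs 2 r_def by auto
  qed (simp add: lhs)
qed

lemma completion_diagonal:
  obtains p where "closed_set p \<noteq> {} \<longleftrightarrow>
    (\<exists>j v. v \<noteq> 0 \<and> ev (pair p (\<lambda>_. 0)) eH [j] v) \<or>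
    (\<exists>j r. r \<in> closed_set (\<lambda>i. k p i - 1) \<and> \<not> ev (pair p (\<lambda>i. Suc (r i))) eH [j] 0)"
proof -
  obtain p where p: "closed_set p = {x. \<forall>n. \<not> completion_diagonal_bad p (prefix x n)}"
    using closed_set_fixpoint[of completion_diagonal_bad, OF completion_diagonal_bad_causal] by blast
  have halts: "(\<exists>j v. v \<noteq> 0 \<and> ev (pair p (\<lambda>_. 0)) eH [j] v) \<longleftrightarrow>
      (\<exists>n j v. v \<noteq> 0 \<and> certified_output eH p (\<lambda>_. 0) j v n)"
    using ex_certified_output_iff by blast
  have "closed_set p \<noteq> {} \<longleftrightarrow>
    (\<exists>j v. v \<noteq> 0 \<and> ev (pair p (\<lambda>_. 0)) eH [j] v) \<or>
    (\<exists>j r. r \<in> closed_set (\<lambda>i. k p i - 1) \<and> \<not> ev (pair p (\<lambda>i. Suc (r i))) eH [j] 0)"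
  proof
    assume "closed_set p \<noteq> {}"
    then obtain x where "x \<in> closed_set p" by blast
    then show "(\<exists>j v. v \<noteq> 0 \<and> ev (pair p (\<lambda>_. 0)) eH [j] v) \<or>
      (\<exists>j r. r \<in> closed_set (\<lambda>i. k p i - 1) \<and> \<not> ev (pair p (\<lambda>i. Suc (r i))) eH [j] 0)"
      using p not_completion_diagonal_bad_iff[of p x] halts by auto
  next
    assume "(\<exists>j v. v \<noteq> 0 \<and> ev (pair p (\<lambda>_. 0)) eH [j] v) \<or>
      (\<exists>j r. r \<in> closed_set (\<lambda>i. k p i - 1) \<and> \<not> ev (pair p (\<lambda>i. Suc (r i))) eH [j] 0)"
    then show "closed_set p \<noteq> {}"
    proof
      assume "\<exists>j v. v \<noteq> 0 \<and> ev (pair p (\<lambda>_. 0)) eH [j] v"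
      then obtain n j v where "v \<noteq> 0" "certified_output eH p (\<lambda>_. 0) j v n"
        using halts by blast
      moreover define x where "x i = (if i = 1 then n else 0)" for i :: nat
      ultimately have "x \<in> closed_set p"
        using p not_completion_diagonal_bad_iff[of p x] by (auto simp: x_def)
      then show ?thesis by blast
    next
      assume "\<exists>j r. r \<in> closed_set (\<lambda>i. k p i - 1) \<and> \<not> ev (pair p (\<lambda>i. Suc (r i))) eH [j] 0"
      then obtain j r where "r \<in> closed_set (\<lambda>i. k p i - 1)" "\<not> ev (pair p (\<lambda>i. Suc (r i))) eH [j] 0"
        by blast
      moreover define x where "x i = (if i = 0 then 1 else if i = 1 then j else r (i - 2))" for i
      ultimately have "x \<in> closed_set p"
        using p not_completion_diagonal_bad_iff[of p x] by (simp add: x_def)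
      then show ?thesis by blast
    qed
  qed
  then show ?thesis using that by blast
qed

lemma no_TC_emptiness_decision:
  "\<not> (\<forall>p r. r \<in> totalization C_baire (closed_set (k p)) \<longrightarrow>
        ev (pair p r) eH [0] (if closed_set p = {} then 1 else 0))"
proof
  assume "\<forall>p r. r \<in> totalization C_baire (closed_set (k p)) \<longrightarrow>
    ev (pair p r) eH [0] (if closed_set p = {} then 1 else 0)"
  then have answer: "\<And>p r. r \<in> totalization C_baire (closed_set (k p)) \<Longrightarrow>
    ev (pair p r) eH [0] (if closed_set p = {} then 1 else 0)" by blast
  have closed_answer: "r \<in> closed_set (k p) \<Longrightarrow> r \<in> totalization C_baire (closed_set (k p))" for p r
    by (simp add: totalization_def C_baire_def)
  obtain p where diagonal: "closed_set p \<noteq> {} \<longleftrightarrow>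
    (\<forall>r. \<not> ev (pair p r) eH [0] 0) \<or> (\<exists>r\<in>closed_set (k p). ev (pair p r) eH [0] 1)"
    by (rule TC_diagonal)
  show False
  proof (cases "closed_set p = {}")
    case True
    with diagonal obtain r0 where r0: "ev (pair p r0) eH [0] 0"
      and no_one: "\<forall>r\<in>closed_set (k p). \<not> ev (pair p r) eH [0] 1" by blast
    have one: "ev (pair p r) eH [0] 1" if "r \<in> totalization C_baire (closed_set (k p))" for r
      using answer[OF that] True by simp
    show False
    proof (cases "closed_set (k p) = {}")
      case True
      then have "ev (pair p r0) eH [0] 1" using one by (simp add: totalization_def C_baire_def)
      with r0 show False using ev_deterministic by fastforce
    next
      case False
      then obtain r where "r \<in> closed_set (k p)" by blast
      with one closed_answer no_one show False by blast
    qed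
  next
    case False
    then have zero: "ev (pair p r) eH [0] 0" if "r \<in> totalization C_baire (closed_set (k p))" for r
      using answer[OF that] by simp
    obtain r0 where "r0 \<in> totalization C_baire (closed_set (k p))"
      using totalization_C_baire_nonempty by blast
    with False diagonal zero obtain r where "r \<in> closed_set (k p)" "ev (pair p r) eH [0] 1" by blast
    with zero[OF closed_answer] show False using ev_deterministic by fastforce
  qed
qed

lemma no_completion_emptiness_semidecision:
  "\<not> (\<forall>p q. completed_answer (k p) q \<longrightarrow>
        (\<exists>s. (\<forall>n. ev (pair p q) eH [n] (s n)) \<and> (s = (\<lambda>_. 0) \<longleftrightarrow> closed_set p \<noteq> {})))"
proof
  assume answer: "\<forall>p q. completed_answer (k p) q \<longrightarrow>
    (\<exists>s. (\<forall>n. ev (pair p q) eH [n] (s n)) \<and> (s = (\<lambda>_. 0) \<longleftrightarrow> closed_set p \<noteq> {}))"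
  have zero: "ev (pair p q) eH [j] 0"
    if "closed_set p \<noteq> {}" and "completed_answer (k p) q" for p q j
    using answer that by fastforce
  have nonzero: "\<exists>j v. v \<noteq> 0 \<and> ev (pair p q) eH [j] v"
    if "closed_set p = {}" and "completed_answer (k p) q" for p q
    using answer that by fastforce
  obtain p where diagonal: "closed_set p \<noteq> {} \<longleftrightarrow>
    (\<exists>j v. v \<noteq> 0 \<and> ev (pair p (\<lambda>_. 0)) eH [j] v) \<or>
    (\<exists>j r. r \<in> closed_set (\<lambda>i. k p i - 1) \<and> \<not> ev (pair p (\<lambda>i. Suc (r i))) eH [j] 0)"
    by (rule completion_diagonal)
  show False
  proof (cases "closed_set p = {}")
    case True
    with diagonal have no_halt: "\<And>j v. v \<noteq> 0 \<Longrightarrow> \<not> ev (pair p (\<lambda>_. 0)) eH [j] v"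
      and all_zero: "\<And>j r. r \<in> closed_set (\<lambda>i. k p i - 1) \<Longrightarrow> ev (pair p (\<lambda>i. Suc (r i))) eH [j] 0"
      by blast+
    from completed_answer_bot_or_point show False
    proof
      assume "completed_answer (k p) (\<lambda>_. 0)"
      then show False using nonzero[OF True] no_halt by blast
    next
      assume "\<exists>x. x \<in> closed_set (\<lambda>i. k p i - 1)"
      then obtain x where x: "x \<in> closed_set (\<lambda>i. k p i - 1)" ..
      then obtain j v where "v \<noteq> 0" "ev (pair p (\<lambda>i. Suc (x i))) eH [j] v"
        using nonzero[OF True completed_answer_delayed_name] delayed_name_0 by metis
      with all_zero[OF x] show False using ev_deterministic by blast
    qed
  next
    case False
    have "ev (pair p (\<lambda>i. Suc (r i))) eH [j] 0" if "r \<in> closed_set (\<lambda>i. k p i - 1)" for j r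
      using zero[OF False completed_answer_delayed_name[OF that, of 0]] by (simp add: delayed_name_0)
    with diagonal False obtain j v where "v \<noteq> 0" "ev (pair p (\<lambda>_. 0)) eH [j] v" by blast
    moreover from this(2) obtain q where "completed_answer (k p) q" "ev (pair p q) eH [j] v"
      by (rule completed_answer_near_bot)
    ultimately show False using zero[OF False] ev_deterministic by blast
  qed
qed

end

lemma WFT_not_le_TC:
  "\<not> weihrauch_le delta_closed delta_two WFT delta_closed delta_baire (totalization C_baire)"
proof
  assume "weihrauch_le delta_closed delta_two WFT delta_closed delta_baire (totalization C_baire)"
  then obtain eH eK k where ev_k: "\<And>p i. ev p eK [i] (k p i)"
    and response: "\<And>p x r. delta_closed p = Some x \<Longrightarrow> r \<in> totalization C_baire (closed_set (k p)) \<Longrightarrow>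
       \<exists>q y. (\<forall>n. ev (pair p r) eH [n] (q n)) \<and> delta_two q = Some y \<and> y \<in> WFT x"
    by (rule weihrauch_reduction_machines[where answers = "\<lambda>k. totalization C_baire (closed_set k)"])
      (auto simp: delta_closed_eq WFT_def realizes_TC_iff totalization_C_baire_nonempty)
  have decision: "ev (pair p r) eH [0] (if closed_set p = {} then 1 else 0)"
    if r: "r \<in> totalization C_baire (closed_set (k p))" for p r
  proof -
    obtain q y where q: "\<forall>n. ev (pair p r) eH [n] (q n)" "delta_two q = Some y" "y \<in> WFT (closed_set p)"
      using response[OF delta_closed_eq r] by blast
    from q(2,3) have "q 0 = (if closed_set p = {} then 1 else 0)"
      by (auto simp: delta_two_def WFT_def split: if_splits)
    with spec[OF q(1), of 0] show ?thesis by simp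
  qed
  interpret machine_pair eH eK k by unfold_locales (rule ev_k)
  show False using no_TC_emptiness_decision decision by blast
qed

lemma WFT_sierp_not_le_completion_C:
  "\<not> weihrauch_le delta_closed delta_sierp WFT
       (completion delta_closed) (completion delta_baire) (pcompletion C_baire)"
proof
  assume reduction: "weihrauch_le delta_closed delta_sierp WFT
    (completion delta_closed) (completion delta_baire) (pcompletion C_baire)"
  have total: "\<exists>x. delta_closed p = Some x \<and> WFT x \<noteq> {}" for p
    by (simp add: delta_closed_eq WFT_def)
  have answers: "{q. completed_answer k q} \<noteq> {}" for k
    using completed_answer_exists by simp
  obtain eH eK k where ev_k: "\<And>p i. ev p eK [i] (k p i)"
    and response: "\<And>p x q. delta_closed p = Some x \<Longrightarrow> q \<in> {q. completed_answer (k p) q} \<Longrightarrow>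
       \<exists>s y. (\<forall>n. ev (pair p q) eH [n] (s n)) \<and> delta_sierp s = Some y \<and> y \<in> WFT x"
    by (rule weihrauch_reduction_machines[where answers = "\<lambda>k. {q. completed_answer k q}",
          OF reduction total answers])
      (simp_all add: realizes_completion_C, blast)
  have semidecision: "\<exists>s. (\<forall>n. ev (pair p q) eH [n] (s n)) \<and> (s = (\<lambda>_. 0) \<longleftrightarrow> closed_set p \<noteq> {})"
    if q: "completed_answer (k p) q" for p q
  proof -
    obtain s y where s: "\<forall>n. ev (pair p q) eH [n] (s n)" "delta_sierp s = Some y" "y \<in> WFT (closed_set p)"
      using response[OF delta_closed_eq] q by blast
    from s(2) have "y = (if s = (\<lambda>_. 0) then 0 else 1)" by (simp add: delta_sierp_def)
    moreover from s(3) have "y = (if closed_set p = {} then 1 else 0)" by (simp add: WFT_def)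
    ultimately have "s = (\<lambda>_. 0) \<longleftrightarrow> closed_set p \<noteq> {}"
      by (cases "s = (\<lambda>_. 0)"; cases "closed_set p = {}") simp_all
    with s(1) show ?thesis by (intro exI[of _ s]) simp
  qed
  interpret machine_pair eH eK k by unfold_locales (rule ev_k)
  show False using no_completion_emptiness_semidecision semidecision by blast
qed

theorem proposition11p4:
  shows "(weihrauch_le delta_closed delta_sierp WFT
            delta_closed delta_baire (totalization C_baire)
          \<and> \<not> weihrauch_le delta_closed delta_sierp WFT
            (completion delta_closed) (completion delta_baire) (pcompletion C_baire))
       \<and> (weihrauch_le_cprod delta_closed delta_two WFT
            delta_closed delta_baire C_baire
            delta_closed delta_baire (totalization C_baire)
          \<and> \<not> weihrauch_le delta_closed delta_two WFT
            delta_closed delta_baire (totalization C_baire))"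
  using WFT_sierp_le_TC WFT_sierp_not_le_completion_C WFT_le_C_star_TC WFT_not_le_TC by blast

end
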